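(* Let $\gamma>0$, let $\mathscr U\subset\mathbb{T}^2\times(0,T)$ be open and $p:\mathscr U\to\mathbb{R}$ continuous and bounded. Then the map $(x,t)\mapsto K_{\gamma,(x,t)}$ is continuous on $\mathscr U$ with respect to the Hausdorff metric, and $\bigcup_{(x,t)\in\mathscr U}K_{\gamma,(x,t)}$ is bounded.
   Context: $\mathcal S_0^{2\times2}$ is the space of traceless symmetric $2\times2$ matrices, $Z:=\mathbb{R}^2\times\mathbb{R}^2\times\mathcal S_0^{2\times2}\times\mathbb{R}$ with elements $(v,m,\sigma,e)$ and Euclidean metric; $K_{\gamma,(x,t)}:=\{z\in Z: v\otimes v-\sigma=e\,\mathrm{Id},\ m=(e+p(x,t))v,\ e\le\gamma\}$. *)

theory Defs
  imports "HOL-Analysis.Analysis"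
begin

text \<open>The space Z = R^2 x R^2 x S_0^{2x2} x R is realised inside the Euclidean
  space (real^2) x (real^2) x (real^2^2) x real (product metric = Euclidean,
  matrices with the Frobenius norm); S_0 is the subspace of traceless
  symmetric matrices.\<close>

type_synonym zpt = "(real^2) \<times> (real^2) \<times> (real^2^2) \<times> real"

definition S0 :: "(real^2^2) set" where
  "S0 = {\<sigma>. transpose \<sigma> = \<sigma> \<and> \<sigma>$1$1 + \<sigma>$2$2 = 0}"

definition outer :: "real^2 \<Rightarrow> real^2 \<Rightarrow> real^2^2" where
  "outer v w = (\<chi> i j. v$i * w$j)"

definition Kset :: "real \<Rightarrow> ((real^2) \<times> real \<Rightarrow> real) \<Rightarrow> (real^2) \<times> real \<Rightarrow> zpt set" where
  "Kset \<gamma> p y = {(v, m, \<sigma>, e). \<sigma> \<in> S0 \<and> outer v v - \<sigma> = e *\<^sub>R mat 1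
        \<and> m = (e + p y) *\<^sub>R v \<and> e \<le> \<gamma>}"

text \<open>Hausdorff distance (meaningful for nonempty bounded sets).\<close>
definition hausdist :: "'a::metric_space set \<Rightarrow> 'a set \<Rightarrow> real" where
  "hausdist A B = max (SUP a\<in>A. infdist a B) (SUP b\<in>B. infdist b A)"

end

theory Submission
  imports Defs
begin

text \<open>Taking the trace of \<open>v \<otimes> v - \<sigma> = e Id\<close> gives \<open>|v|\<^sup>2 = 2e \<le> 2\<gamma>\<close>, so
  \<open>v\<close>, \<open>e\<close> and \<open>\<sigma> = v \<otimes> v - e Id\<close> are bounded independently of the point, and \<open>m\<close> is
  bounded as soon as \<open>p\<close> is. Moreover \<open>p\<close> enters only through \<open>m\<close>: replacing \<open>m\<close> by
  \<open>(e + p(y)) v\<close> maps \<open>K\<^sub>y\<^sub>'\<close> onto \<open>K\<^sub>y\<close> and moves each point by \<open>|p(y') - p(y)| |v|\<close>,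
  so the Hausdorff distance of \<open>K\<^sub>y\<^sub>'\<close> and \<open>K\<^sub>y\<close> is at most \<open>\<surd>(2\<gamma>) |p(y') - p(y)|\<close>.\<close>

lemma trace_outer: "trace (outer v w) = v \<bullet> w"
  by (simp add: trace_def outer_def inner_vec_def)

lemma trace_S0: "\<sigma> \<in> S0 \<Longrightarrow> trace \<sigma> = 0"
  by (simp add: S0_def trace_def sum_2)

lemma norm_outer: "norm (outer v w) = norm v * norm w"
proof -
  have "outer v w $ i = v $ i *\<^sub>R w" for i
    by (simp add: outer_def vec_eq_iff)
  then show ?thesis
    by (simp add: norm_vec_def[of "outer v w"] norm_vec_def[of v] L2_set_left_distrib)
qed

lemma norm_mat_1: "norm (mat 1 :: real^'n^'n) = sqrt CARD('n)"
proof -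
  have "(mat 1 :: real^'n^'n) $ i = axis i 1" for i
    by (simp add: mat_def axis_def vec_eq_iff)
  then show ?thesis
    by (simp add: norm_vec_def[of "mat 1"] L2_set_constant)
qed

lemma Kset_memberD:
  assumes "(v, m, \<sigma>, e) \<in> Kset \<gamma> p y"
  shows "\<sigma> = outer v v - e *\<^sub>R mat 1" and "m = (e + p y) *\<^sub>R v" and "e \<le> \<gamma>"
    and "(norm v)\<^sup>2 = 2 * e"
proof -
  from assms have "\<sigma> \<in> S0" and eq: "outer v v - \<sigma> = e *\<^sub>R mat 1"
    and "m = (e + p y) *\<^sub>R v" and "e \<le> \<gamma>"
    unfolding Kset_def by auto
  then show "\<sigma> = outer v v - e *\<^sub>R mat 1" "m = (e + p y) *\<^sub>R v" "e \<le> \<gamma>"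
    by (auto simp: algebra_simps)
  have "(norm v)\<^sup>2 = trace (outer v v - \<sigma>)"
    using \<open>\<sigma> \<in> S0\<close> by (simp add: trace_sub trace_outer trace_S0 power2_norm_eq_inner)
  also have "\<dots> = trace (e *\<^sub>R mat 1 :: real^2^2)"
    using eq by simp
  also have "\<dots> = 2 * e"
    by (simp add: trace_def mat_def sum_2)
  finally show "(norm v)\<^sup>2 = 2 * e" .
qed

lemma Kset_energy_nonneg: "(v, m, \<sigma>, e) \<in> Kset \<gamma> p y \<Longrightarrow> 0 \<le> e"
  using Kset_memberD(4) zero_le_power2[of "norm v"] by fastforce

lemma Kset_norm_velocity_le: "(v, m, \<sigma>, e) \<in> Kset \<gamma> p y \<Longrightarrow> norm v \<le> sqrt (2 * \<gamma>)"
  using Kset_memberD(3,4)[of v m \<sigma> e] by (simp add: real_le_rsqrt)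

lemma zero_in_Kset: "0 \<le> \<gamma> \<Longrightarrow> (0, 0, 0, 0) \<in> Kset \<gamma> p y"
  by (simp add: Kset_def S0_def outer_def transpose_def vec_eq_iff)

lemma infdist_Kset_le:
  assumes "z \<in> Kset \<gamma> p y'"
  shows "infdist z (Kset \<gamma> p y) \<le> \<bar>p y' - p y\<bar> * sqrt (2 * \<gamma>)"
proof -
  obtain v m \<sigma> e where z: "z = (v, m, \<sigma>, e)"
    by (cases z) auto
  with assms have K': "(v, m, \<sigma>, e) \<in> Kset \<gamma> p y'"
    by simp
  then have "(v, (e + p y) *\<^sub>R v, \<sigma>, e) \<in> Kset \<gamma> p y"
    by (auto simp: Kset_def)
  then have "infdist z (Kset \<gamma> p y) \<le> dist z (v, (e + p y) *\<^sub>R v, \<sigma>, e)"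
    by (rule infdist_le)
  also have "\<dots> = \<bar>p y' - p y\<bar> * norm v"
    using Kset_memberD(2)[OF K'] by (simp add: z dist_Pair_Pair dist_norm algebra_simps flip: scaleR_diff_left)
  also have "\<dots> \<le> \<bar>p y' - p y\<bar> * sqrt (2 * \<gamma>)"
    using Kset_norm_velocity_le[OF K'] by (simp add: mult_left_mono)
  finally show ?thesis .
qed

lemma hausdist_le:
  assumes "A \<noteq> {}" "B \<noteq> {}"
    and "\<And>a. a \<in> A \<Longrightarrow> infdist a B \<le> d" "\<And>b. b \<in> B \<Longrightarrow> infdist b A \<le> d"
  shows "hausdist A B \<le> d"
  using assms by (simp add: hausdist_def cSUP_least)

lemma hausdist_Kset_le:
  assumes "0 \<le> \<gamma>"
  shows "hausdist (Kset \<gamma> p y') (Kset \<gamma> p y) \<le> \<bar>p y' - p y\<bar> * sqrt (2 * \<gamma>)"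
proof (rule hausdist_le)
  show "Kset \<gamma> p y' \<noteq> {}" "Kset \<gamma> p y \<noteq> {}"
    using zero_in_Kset[OF assms] by blast+
  show "infdist z (Kset \<gamma> p y) \<le> \<bar>p y' - p y\<bar> * sqrt (2 * \<gamma>)" if "z \<in> Kset \<gamma> p y'" for z
    using that by (rule infdist_Kset_le)
  show "infdist z (Kset \<gamma> p y') \<le> \<bar>p y' - p y\<bar> * sqrt (2 * \<gamma>)" if "z \<in> Kset \<gamma> p y" for z
    using infdist_Kset_le[OF that, of y'] by (simp add: abs_minus_commute)
qed

lemma Kset_hausdist_continuous:
  assumes "0 \<le> \<gamma>" "continuous_on U p" "y \<in> U" "0 < \<epsilon>"
  shows "\<exists>\<delta>>0. \<forall>y'\<in>U. dist y' y < \<delta> \<longrightarrow> hausdist (Kset \<gamma> p y') (Kset \<gamma> p y) < \<epsilon>"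
proof -
  define L where "L = sqrt (2 * \<gamma>) + 1"
  have "0 < L"
    using assms(1) by (simp add: L_def add_nonneg_pos)
  with assms(4) have "0 < \<epsilon> / L"
    by simp
  with assms(2,3) obtain \<delta> where "0 < \<delta>"
    and \<delta>: "\<And>y'. y' \<in> U \<Longrightarrow> dist y' y < \<delta> \<Longrightarrow> dist (p y') (p y) < \<epsilon> / L"
    unfolding continuous_on_iff by metis
  have "hausdist (Kset \<gamma> p y') (Kset \<gamma> p y) < \<epsilon>" if "y' \<in> U" "dist y' y < \<delta>" for y'
  proof -
    have "hausdist (Kset \<gamma> p y') (Kset \<gamma> p y) \<le> \<bar>p y' - p y\<bar> * sqrt (2 * \<gamma>)"
      using assms(1) by (rule hausdist_Kset_le)
    also have "\<dots> \<le> \<bar>p y' - p y\<bar> * L"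
      by (simp add: L_def mult_left_mono)
    also have "\<dots> < \<epsilon>"
      using \<delta>[OF that] \<open>0 < L\<close> by (simp add: dist_real_def pos_less_divide_eq)
    finally show ?thesis .
  qed
  with \<open>0 < \<delta>\<close> show ?thesis
    by blast
qed

lemma bounded_UN_Kset:
  assumes "0 \<le> \<gamma>" and P: "\<And>y. y \<in> U \<Longrightarrow> \<bar>p y\<bar> \<le> P"
  shows "bounded (\<Union>y\<in>U. Kset \<gamma> p y)"
proof -
  define R where "R = sqrt (2 * \<gamma>)"
  have "(\<Union>y\<in>U. Kset \<gamma> p y) \<subseteq>
      cball 0 R \<times> cball 0 ((\<gamma> + P) * R) \<times> cball 0 (R * R + \<gamma> * sqrt 2) \<times> cball 0 \<gamma>"
  proof (clarsimp)
    fix y v m \<sigma> e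
    assume "y \<in> U" and K: "(v, m, \<sigma>, e) \<in> Kset \<gamma> p y"
    note K_eqs = Kset_memberD[OF K]
    have "0 \<le> e" "norm v \<le> R"
      using Kset_energy_nonneg[OF K] Kset_norm_velocity_le[OF K] by (auto simp: R_def)
    have "norm m = \<bar>e + p y\<bar> * norm v"
      using K_eqs(2) by simp
    also have "\<dots> \<le> (\<gamma> + P) * R"
      using K_eqs(3) \<open>0 \<le> e\<close> \<open>norm v \<le> R\<close> P[OF \<open>y \<in> U\<close>] by (intro mult_mono) auto
    finally have "norm m \<le> (\<gamma> + P) * R" .
    moreover have "norm \<sigma> \<le> R * R + \<gamma> * sqrt 2"
    proof -
      have "norm \<sigma> \<le> norm (outer v v) + norm (e *\<^sub>R mat 1 :: real^2^2)"
        using K_eqs(1) norm_triangle_ineq4 by blast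
      also have "\<dots> = norm v * norm v + e * sqrt 2"
        using \<open>0 \<le> e\<close> by (simp add: norm_outer norm_mat_1)
      also have "\<dots> \<le> R * R + \<gamma> * sqrt 2"
        using K_eqs(3) \<open>0 \<le> e\<close> \<open>norm v \<le> R\<close> by (intro add_mono mult_mono) (auto simp: R_def)
      finally show ?thesis .
    qed
    ultimately show "norm v \<le> R \<and> norm m \<le> (\<gamma> + P) * R \<and> norm \<sigma> \<le> R * R + \<gamma> * sqrt 2 \<and> \<bar>e\<bar> \<le> \<gamma>"
      using \<open>norm v \<le> R\<close> \<open>0 \<le> e\<close> K_eqs(3) by simp
  qed
  then show ?thesis
    by (rule bounded_subset[rotated]) (intro bounded_Times bounded_cball)
qed

theorem lemma2p12:
  fixes \<gamma> T :: real and U :: "((real^2) \<times> real) set" and p :: "(real^2) \<times> real \<Rightarrow> real"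
  assumes "\<gamma> > 0"
    and "open U"
    and "U \<subseteq> {(x, t). 0 < t \<and> t < T}"
    and "\<And>x t k. (x, t) \<in> U \<Longrightarrow> (\<forall>i. k $ i \<in> \<int>) \<Longrightarrow> (x + k, t) \<in> U \<and> p (x + k, t) = p (x, t)"
    and "continuous_on U p"
    and "bounded (p ` U)"
  shows "(\<forall>y\<in>U. \<forall>\<epsilon>>0. \<exists>\<delta>>0. \<forall>y'\<in>U. dist y' y < \<delta> \<longrightarrow>
            hausdist (Kset \<gamma> p y') (Kset \<gamma> p y) < \<epsilon>)
         \<and> bounded (\<Union>y\<in>U. Kset \<gamma> p y)"
proof
  show "\<forall>y\<in>U. \<forall>\<epsilon>>0. \<exists>\<delta>>0. \<forall>y'\<in>U. dist y' y < \<delta> \<longrightarrow>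
          hausdist (Kset \<gamma> p y') (Kset \<gamma> p y) < \<epsilon>"
    using Kset_hausdist_continuous assms(1,5) by simp
  obtain P where "\<And>y. y \<in> U \<Longrightarrow> \<bar>p y\<bar> \<le> P"
    using assms(6) unfolding bounded_iff by auto
  with assms(1) show "bounded (\<Union>y\<in>U. Kset \<gamma> p y)"
    by (intro bounded_UN_Kset) auto
qed

end
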